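(* For a non-negative integer $m$, let $k^*_m$ denote the minimum $k \ge 0$ such that there exist non-negative integers $x_1,\dots,x_k,y_1,\dots,y_k$ with $\sum_{i=1}^k 2^{x_i}3^{y_i} = m$ (so $k^*_0 = 0$). For a positive integer $n$ let $$\mathcal{A}^*(n) := \frac{1}{2^n}\sum_{m=0}^{2^n-1} k^*_m .$$ Then $\mathcal{A}^*(n) \in \Omega(n/\lg n)$ as $n \to \infty$.
   Context: A representation of a non-negative integer $m$ in the double-base number system is a tuple $[k, \langle x_i\rangle_{i=1}^k, \langle y_i\rangle_{i=1}^k]$ of non-negative integers with $\sum_{i=1}^k 2^{x_i}3^{y_i}=m$; $k$ is its number of terms, and $k^*_m$ is the number of terms of a representation of $m$ with the fewest terms. $\lg$ denotes the base-2 logarithm. *)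

theory Defs
  imports Complex_Main "HOL-Library.Landau_Symbols"
begin

definition dbns_rep :: "(nat \<times> nat) list \<Rightarrow> nat \<Rightarrow> bool" where
  "dbns_rep xs m \<longleftrightarrow> (\<Sum>p\<leftarrow>xs. 2 ^ fst p * 3 ^ snd p) = m"

definition kstar :: "nat \<Rightarrow> nat" where
  "kstar m = (LEAST k. \<exists>xs. length xs = k \<and> dbns_rep xs m)"

definition Astar :: "nat \<Rightarrow> real" where
  "Astar n = (\<Sum>m<2 ^ n. real (kstar m)) / 2 ^ n"

end

theory Submission
  imports Defs
begin

text \<open>A number below \<open>2^n\<close> with \<open>k\<^sup>*\<^sub>m \<le> k\<close> is a sum of at most \<open>k\<close> terms \<open>2^a 3^b\<close> with
  \<open>a, b < n\<close>, so there are at most \<open>(n\<^sup>2 + 1)^k\<close> of them. For \<open>k \<approx> n / (4 lg n)\<close> this is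
  at most half of the \<open>2^n\<close> numbers, so at least half of them need more than \<open>k\<close> terms and
  the average is at least \<open>(k + 1) / 2\<close>.\<close>

lemma dbns_rep_replicate: "dbns_rep (replicate m (0, 0)) m"
  by (simp add: dbns_rep_def sum_list_replicate)

lemma obtain_minimal_dbns_rep:
  obtains xs where "length xs = kstar m" "dbns_rep xs m"
proof -
  have "\<exists>k xs. length xs = k \<and> dbns_rep xs m"
    using dbns_rep_replicate by blast
  then have "\<exists>xs. length xs = kstar m \<and> dbns_rep xs m"
    unfolding kstar_def by (rule LeastI_ex)
  then show ?thesis using that by blast
qed

lemma dbns_rep_term_le:
  assumes "dbns_rep xs m" "(a, b) \<in> set xs"
  shows "2 ^ a * 3 ^ b \<le> m"
proof -
  have "2 ^ a * 3 ^ b \<in> set (map (\<lambda>p. (2::nat) ^ fst p * 3 ^ snd p) xs)"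
    using assms(2) by force
  then have "2 ^ a * 3 ^ b \<le> (\<Sum>p\<leftarrow>xs. (2::nat) ^ fst p * 3 ^ snd p)"
    by (rule member_le_sum_list) simp
  with assms(1) show ?thesis unfolding dbns_rep_def by simp
qed

lemma exponents_less_if_less_two_power:
  assumes "2 ^ a * 3 ^ b < (2::nat) ^ n"
  shows "a < n" "b < n"
proof -
  have "(2::nat) ^ a \<le> 2 ^ a * 3 ^ b" by simp
  then have "(2::nat) ^ a < 2 ^ n" using assms by (rule le_less_trans)
  then show "a < n" by simp
  have "(2::nat) ^ b \<le> 3 ^ b" by (rule power_mono) auto
  also have "\<dots> \<le> 2 ^ a * 3 ^ b" by simp
  finally have "(2::nat) ^ b < 2 ^ n" using assms by (rule le_less_trans)
  then show "b < n" by simp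
qed

lemma dbns_rep_exponents_less:
  assumes "dbns_rep xs m" "m < 2 ^ n"
  shows "set xs \<subseteq> {..<n} \<times> {..<n}"
proof (rule subrelI)
  fix a b assume "(a, b) \<in> set xs"
  with assms(1) have "2 ^ a * 3 ^ b \<le> m" by (rule dbns_rep_term_le)
  then have "2 ^ a * 3 ^ b < (2::nat) ^ n" using assms(2) by (rule le_less_trans)
  from exponents_less_if_less_two_power[OF this]
  show "(a, b) \<in> {..<n} \<times> {..<n}" by simp
qed

lemma sum_powers_le_Suc_power: "(\<Sum>i\<le>k. (N::nat) ^ i) \<le> Suc N ^ k"
proof (induction k)
  case 0
  then show ?case by simp
next
  case (Suc k)
  have "(\<Sum>i\<le>Suc k. N ^ i) = (\<Sum>i\<le>k. N ^ i) + N * N ^ k" by simp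
  also have "\<dots> \<le> Suc N ^ k + N * Suc N ^ k"
    using Suc.IH power_mono[of N "Suc N" k] by (intro add_mono mult_le_mono2) auto
  also have "\<dots> = Suc N ^ Suc k" by simp
  finally show ?case .
qed

lemma card_kstar_le: "card {m \<in> {..<2 ^ n}. kstar m \<le> k} \<le> Suc (n * n) ^ k"
proof -
  let ?val = "\<lambda>xs. \<Sum>p\<leftarrow>xs. (2::nat) ^ fst p * 3 ^ snd p"
  let ?reps = "{xs. set xs \<subseteq> {..<n} \<times> {..<n} \<and> length xs \<le> k}"
  have "{m \<in> {..<2 ^ n}. kstar m \<le> k} \<subseteq> ?val ` ?reps"
  proof
    fix m assume "m \<in> {m \<in> {..<2 ^ n}. kstar m \<le> k}"
    then have m: "m < 2 ^ n" "kstar m \<le> k" by auto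
    obtain xs where xs: "length xs = kstar m" "dbns_rep xs m"
      by (rule obtain_minimal_dbns_rep)
    then have "xs \<in> ?reps"
      using m dbns_rep_exponents_less by auto
    moreover have "m = ?val xs" using xs(2) by (simp add: dbns_rep_def)
    ultimately show "m \<in> ?val ` ?reps" by blast
  qed
  moreover have fin: "finite ?reps"
    using finite_lists_length_le[of "{..<n} \<times> {..<n}" k] by simp
  ultimately have "card {m \<in> {..<2 ^ n}. kstar m \<le> k} \<le> card (?val ` ?reps)"
    by (intro card_mono finite_imageI)
  also have "\<dots> \<le> card ?reps" using fin by (rule card_image_le)
  also have "\<dots> = (\<Sum>i\<le>k. (n * n) ^ i)" by (subst card_lists_length_le) auto
  also have "\<dots> \<le> Suc (n * n) ^ k" by (rule sum_powers_le_Suc_power)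
  finally show ?thesis .
qed

lemma sum_ge_if_few_small_values:
  fixes f :: "'a \<Rightarrow> nat"
  assumes "finite A" "card {x \<in> A. f x \<le> k} \<le> c"
  shows "(card A - c) * Suc k \<le> sum f A"
proof -
  let ?large = "A - {x \<in> A. f x \<le> k}"
  have "card A - c \<le> card ?large"
    using assms by (subst card_Diff_subset) auto
  then have "(card A - c) * Suc k \<le> card ?large * Suc k" by (rule mult_le_mono1)
  also have "\<dots> = (\<Sum>x\<in>?large. Suc k)" by simp
  also have "\<dots> \<le> (\<Sum>x\<in>?large. f x)" by (rule sum_mono) auto
  also have "\<dots> \<le> sum f A" using assms(1) by (intro sum_mono2) auto
  finally show ?thesis .
qed

lemma Astar_ge:
  assumes "2 * Suc (n * n) ^ k \<le> 2 ^ n"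
  shows "(real k + 1) / 2 \<le> Astar n"
proof -
  have "2 ^ n * Suc k \<le> 2 * (2 ^ n - Suc (n * n) ^ k) * Suc k"
    using assms by (intro mult_le_mono1) simp
  also have "\<dots> \<le> 2 * (\<Sum>m<2 ^ n. kstar m)"
    using sum_ge_if_few_small_values[OF finite_lessThan card_kstar_le[of n k]] by (simp add: mult.assoc)
  finally have "real (2 ^ n * Suc k) \<le> real (2 * (\<Sum>m<2 ^ n. kstar m))"
    by (simp only: of_nat_le_iff)
  then have "2 ^ n * (real k + 1) \<le> 2 * (\<Sum>m<2 ^ n. real (kstar m))"
    by (simp add: algebra_simps)
  then show ?thesis unfolding Astar_def by (simp add: field_simps)
qed

lemma two_mul_Suc_square_power_le:
  fixes n k :: nat
  assumes "4 \<le> n" "4 * k * log 2 n \<le> n"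
  shows "2 * Suc (n * n) ^ k \<le> 2 ^ n"
proof -
  have "1 \<le> n * n" using assms(1) by (simp add: Suc_le_eq)
  then have "Suc (n * n) \<le> n * n * 2" by simp
  also have "\<dots> \<le> n * n * n" using assms(1) by (intro mult_le_mono2) simp
  finally have "Suc (n * n) \<le> n ^ 3" by (simp add: power3_eq_cube)
  then have "real (Suc (n * n)) \<le> real n ^ 3" by (simp only: of_nat_le_iff flip: of_nat_power)
  then have "real (Suc (n * n) ^ k) \<le> (real n ^ 3) ^ k"
    by (simp only: of_nat_power) (rule power_mono, auto)
  also have "\<dots> = real n powr real (3 * k)"
    unfolding power_mult[symmetric] by (rule powr_realpow[symmetric]) (use assms in simp)
  also have "\<dots> = (2 powr log 2 n) powr real (3 * k)"
    using assms(1) by simp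
  also have "\<dots> = 2 powr (3 * k * log 2 n)"
    by (simp only: powr_powr) (simp add: mult_ac)
  also have "\<dots> \<le> 2 powr (n - 1)"
  proof -
    have "0 \<le> k * log 2 n" using assms(1) by simp
    then show ?thesis using assms by simp
  qed
  also have "\<dots> = 2 ^ n / 2"
    using assms(1) by (cases n) (simp_all add: powr_diff powr_realpow)
  finally have "real (2 * Suc (n * n) ^ k) \<le> real (2 ^ n)" by simp
  then show ?thesis by (simp only: of_nat_le_iff)
qed

theorem theorem1:
  shows "Astar \<in> \<Omega>(\<lambda>n. real n / log 2 (real n))"
proof (rule landau_omega.bigI[of "1 / 8"])
  show "eventually (\<lambda>n. 1 / 8 * norm (real n / log 2 (real n)) \<le> norm (Astar n)) at_top"
    using eventually_ge_at_top[of "4::nat"]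
  proof eventually_elim
    case (elim n)
    define L where "L = log 2 (real n)"
    have "0 < L" using elim unfolding L_def by simp
    define k where "k = nat \<lfloor>n / (4 * L)\<rfloor>"
    have "real k \<le> n / (4 * L)" and "n / (4 * L) < real k + 1"
      unfolding k_def using \<open>0 < L\<close> by (simp_all add: of_nat_floor)
    then have "4 * k * L \<le> n" and "1 / 8 * (n / L) \<le> (real k + 1) / 2"
      using \<open>0 < L\<close> by (simp_all add: field_simps)
    moreover have "(real k + 1) / 2 \<le> Astar n"
      using elim \<open>4 * k * L \<le> n\<close>
      unfolding L_def by (intro Astar_ge two_mul_Suc_square_power_le)
    ultimately show ?case using \<open>0 < L\<close> unfolding L_def by simp
  qed
qed simp

end
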